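(* Let $h:\mathcal{I}\to\mathcal{J}$ have a non-decreasing upper tail with threshold $c\in(\inf\mathcal{I},\sup\mathcal{I})$, let $h^{\star}=\sup_{x<c,\,x\in\mathcal{I}}h(x)$, and define $\tilde h:\mathcal{I}\to\mathcal{J}$ by $\tilde h(x)=h^{\star}$ if $x<c$, $\tilde h(c)=\max\{h(c),h^{\star}\}$, and $\tilde h(x)=h(x)$ if $x>c$. Then: (1) if $h$ is left-continuous, $\tilde h$ is left-continuous; (2) if $h$ is right-continuous, $\tilde h$ is right-continuous.
   Context: $\mathcal{I},\mathcal{J}\subseteq\mathbb{R}$ intervals; $h$ is real-valued whose discontinuities (if any) are jumps at which it is left- or right-continuous. A function $h:\mathcal{I}\to\mathcal{J}$ has a non-decreasing upper tail if there exists $x'\in\mathcal{I}$ such that (1) $h(x)\le h(x')$ for all $x\in\mathcal{I}$ with $x<x'$, and (2) $h(x_1)\le h(x_2)$ for all $x_1,x_2\in\mathcal{I}$ with $x'\le x_1\le x_2$. Its threshold $c$ is the infimum of the (assumed nonempty) set of all such $x'$. *)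

theory Defs
  imports "HOL-Analysis.Analysis"
begin

definition tail_witness :: "real set \<Rightarrow> (real \<Rightarrow> real) \<Rightarrow> real \<Rightarrow> bool" where
  "tail_witness I h x' \<longleftrightarrow> x' \<in> I \<and>
     (\<forall>x\<in>I. x < x' \<longrightarrow> h x \<le> h x') \<and>
     (\<forall>x1\<in>I. \<forall>x2\<in>I. x' \<le> x1 \<and> x1 \<le> x2 \<longrightarrow> h x1 \<le> h x2)"

definition has_nondec_upper_tail :: "real set \<Rightarrow> (real \<Rightarrow> real) \<Rightarrow> bool" where
  "has_nondec_upper_tail I h \<longleftrightarrow> (\<exists>x'. tail_witness I h x')"

definition tail_threshold :: "real set \<Rightarrow> (real \<Rightarrow> real) \<Rightarrow> real" where
  "tail_threshold I h = Inf {x'. tail_witness I h x'}"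

definition left_continuous_on :: "real set \<Rightarrow> (real \<Rightarrow> real) \<Rightarrow> bool" where
  "left_continuous_on I h \<longleftrightarrow> (\<forall>x\<in>I. (h \<longlongrightarrow> h x) (at x within (I \<inter> {..<x})))"

definition right_continuous_on :: "real set \<Rightarrow> (real \<Rightarrow> real) \<Rightarrow> bool" where
  "right_continuous_on I h \<longleftrightarrow> (\<forall>x\<in>I. (h \<longlongrightarrow> h x) (at x within (I \<inter> {x<..})))"

definition hstar :: "real set \<Rightarrow> (real \<Rightarrow> real) \<Rightarrow> real \<Rightarrow> real" where
  "hstar I h c = Sup (h ` {x\<in>I. x < c})"

definition htilde :: "real set \<Rightarrow> (real \<Rightarrow> real) \<Rightarrow> real \<Rightarrow> real \<Rightarrow> real" where
  "htilde I h c x = (if x < c then hstar I h c else if x = c then max (h c) (hstar I h c) else h x)"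

end

theory Submission
  imports Defs
begin

text \<open>Every point of I beyond the threshold c is itself a tail witness, so every value of h
  to the left of c is dominated by the values of h to the right of c; in particular h* is
  finite. Left-continuity of h at c then forces h(c) \<le> h*, so the modified function is
  constant up to and including c; right-continuity at c forces h* \<le> h(c), so it agrees with h
  from c on.\<close>

lemma tail_witness_mono:
  assumes "tail_witness I h w" "z \<in> I" "w \<le> z"
  shows "tail_witness I h z"
  unfolding tail_witness_def
proof (intro conjI ballI impI)
  have w: "w \<in> I" "\<And>x. x \<in> I \<Longrightarrow> x < w \<Longrightarrow> h x \<le> h w"
    "\<And>x1 x2. x1 \<in> I \<Longrightarrow> x2 \<in> I \<Longrightarrow> w \<le> x1 \<Longrightarrow> x1 \<le> x2 \<Longrightarrow> h x1 \<le> h x2"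
    using assms(1) unfolding tail_witness_def by auto
  show "z \<in> I" by (rule assms(2))
  show "h x \<le> h z" if "x \<in> I" "x < z" for x
  proof (cases "x < w")
    case True
    then have "h x \<le> h w" using w(2) that by blast
    also have "h w \<le> h z" using w(1,3) assms by simp
    finally show ?thesis .
  next
    case False
    then show ?thesis using w(3)[of x z] that assms(2) by simp
  qed
  show "h x1 \<le> h x2" if "x1 \<in> I" "x2 \<in> I" "z \<le> x1 \<and> x1 \<le> x2" for x1 x2
    using w(3)[of x1 x2] that assms(3) by simp
qed

lemma tail_witness_above_threshold:
  assumes "has_nondec_upper_tail I h" "z \<in> I" "tail_threshold I h < z"
  shows "tail_witness I h z"
proof -
  have "\<exists>w. tail_witness I h w \<and> w < z"
  proof (cases "bdd_below {w. tail_witness I h w}")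
    case True
    with assms show ?thesis
      by (simp add: tail_threshold_def has_nondec_upper_tail_def cInf_less_iff)
  next
    case False
    then show ?thesis unfolding bdd_below_def by (auto simp: not_le)
  qed
  then obtain w where "tail_witness I h w" "w < z" by blast
  then show ?thesis using tail_witness_mono assms(2) by simp
qed

lemma le_beyond_tail_threshold:
  assumes "has_nondec_upper_tail I h" "z \<in> I" "tail_threshold I h < z" "y \<in> I" "y < z"
  shows "h y \<le> h z"
  using tail_witness_above_threshold[OF assms(1-3)] assms(4,5) by (simp add: tail_witness_def)

lemma le_hstar:
  assumes "bdd_above (h ` {x\<in>I. x < c})" "y \<in> I" "y < c"
  shows "h y \<le> hstar I h c"
  unfolding hstar_def using assms by (auto intro: cSup_upper)

lemma hstar_le:
  assumes "y0 \<in> I" "y0 < c" "\<And>y. y \<in> I \<Longrightarrow> y < c \<Longrightarrow> h y \<le> M"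
  shows "hstar I h c \<le> M"
  unfolding hstar_def using assms by (auto intro: cSup_least)

lemma htilde_below: "x < c \<Longrightarrow> htilde I h c x = hstar I h c"
  by (simp add: htilde_def)

lemma htilde_above: "c < x \<Longrightarrow> htilde I h c x = h x"
  by (simp add: htilde_def)

lemma tendsto_htilde_below:
  assumes "x < c"
  shows "(htilde I h c \<longlongrightarrow> htilde I h c x) (at x within S)"
proof (rule tendsto_eventually)
  have "eventually (\<lambda>y. y < c) (at x within S)"
    using order_tendstoD(2)[OF tendsto_ident_at assms] .
  then show "eventually (\<lambda>y. htilde I h c y = htilde I h c x) (at x within S)"
    by eventually_elim (simp add: htilde_below assms)
qed

lemma tendsto_htilde_above:
  assumes "c < x" "(h \<longlongrightarrow> h x) (at x within S)"
  shows "(htilde I h c \<longlongrightarrow> htilde I h c x) (at x within S)"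
proof -
  have "eventually (\<lambda>y. c < y) (at x within S)"
    using order_tendstoD(1)[OF tendsto_ident_at assms(1)] .
  then have "eventually (\<lambda>y. h y = htilde I h c y) (at x within S)"
    by eventually_elim (simp add: htilde_above)
  from Lim_transform_eventually[OF assms(2) this] show ?thesis
    by (simp add: htilde_above assms(1))
qed

lemma at_within_interval_left:
  fixes I :: "real set"
  assumes "is_interval I" "a \<in> I" "a < c" "c \<in> I"
  shows "at c within (I \<inter> {..<c}) = at_left c"
proof (rule at_within_nhd[of _ "{a<..}"])
  have "{a<..<c} \<subseteq> I" using mem_is_interval_1_I[OF assms(1,2,4)] by auto
  then show "I \<inter> {..<c} \<inter> {a<..} - {c} = {..<c} \<inter> {a<..} - {c}" by auto
qed (use assms in auto)

lemma at_within_interval_right: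
  fixes I :: "real set"
  assumes "is_interval I" "b \<in> I" "c < b" "c \<in> I"
  shows "at c within (I \<inter> {c<..}) = at_right c"
proof (rule at_within_nhd[of _ "{..<b}"])
  have "{c<..<b} \<subseteq> I" using mem_is_interval_1_I[OF assms(1,4,2)] by auto
  then show "I \<inter> {c<..} \<inter> {..<b} - {c} = {c<..} \<inter> {..<b} - {c}" by auto
qed (use assms in auto)

lemma left_continuous_on_htilde:
  assumes "is_interval I" "left_continuous_on I h" "a \<in> I" "a < c" "c \<in> I"
    and "bdd_above (h ` {x\<in>I. x < c})"
  shows "left_continuous_on I (htilde I h c)"
  unfolding left_continuous_on_def
proof
  fix x assume "x \<in> I"
  consider "x < c" | "x = c" | "c < x" by linarith
  then show "(htilde I h c \<longlongrightarrow> htilde I h c x) (at x within I \<inter> {..<x})"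
  proof cases
    case 1
    then show ?thesis by (rule tendsto_htilde_below)
  next
    case 2
    let ?F = "at c within I \<inter> {..<c}"
    have F: "?F = at_left c" by (rule at_within_interval_left[OF assms(1,3,4,5)])
    have lim: "(h \<longlongrightarrow> h c) ?F" using assms(2,5) by (simp add: left_continuous_on_def)
    have near: "eventually (\<lambda>y. y \<in> I \<and> y < c) ?F" by (simp add: eventually_at_filter)
    have "h c \<le> hstar I h c"
    proof (rule tendsto_upperbound[OF lim])
      show "eventually (\<lambda>y. h y \<le> hstar I h c) ?F"
        using near by eventually_elim (simp add: le_hstar assms(6))
    qed (simp add: F trivial_limit_at_left_real)
    then have "htilde I h c c = hstar I h c" by (simp add: htilde_def)
    moreover have "eventually (\<lambda>y. htilde I h c y = hstar I h c) ?F"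
      using near by eventually_elim (simp add: htilde_below)
    ultimately show ?thesis using 2 by (simp add: tendsto_eventually)
  next
    case 3
    then show ?thesis
      using assms(2) \<open>x \<in> I\<close> by (simp add: tendsto_htilde_above left_continuous_on_def)
  qed
qed

lemma right_continuous_on_htilde:
  assumes "is_interval I" "right_continuous_on I h" "a \<in> I" "a < c" "b \<in> I" "c < b" "c \<in> I"
    and sep: "\<And>y z. y \<in> I \<Longrightarrow> z \<in> I \<Longrightarrow> y < c \<Longrightarrow> c < z \<Longrightarrow> h y \<le> h z"
  shows "right_continuous_on I (htilde I h c)"
  unfolding right_continuous_on_def
proof
  fix x assume "x \<in> I"
  consider "x < c" | "x = c" | "c < x" by linarith
  then show "(htilde I h c \<longlongrightarrow> htilde I h c x) (at x within I \<inter> {x<..})"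
  proof cases
    case 1
    then show ?thesis by (rule tendsto_htilde_below)
  next
    case 2
    let ?F = "at c within I \<inter> {c<..}"
    have F: "?F = at_right c" by (rule at_within_interval_right[OF assms(1,5,6,7)])
    have lim: "(h \<longlongrightarrow> h c) ?F" using assms(2,7) by (simp add: right_continuous_on_def)
    have near: "eventually (\<lambda>z. z \<in> I \<and> c < z) ?F" by (simp add: eventually_at_filter)
    have "h y \<le> h c" if "y \<in> I" "y < c" for y
    proof (rule tendsto_lowerbound[OF lim])
      show "eventually (\<lambda>z. h y \<le> h z) ?F"
        using near by eventually_elim (simp add: sep that)
    qed (simp add: F trivial_limit_at_right_real)
    then have "hstar I h c \<le> h c" by (rule hstar_le[OF assms(3,4)])
    then have "htilde I h c c = h c" by (simp add: htilde_def)
    moreover have "eventually (\<lambda>z. h z = htilde I h c z) ?F"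
      using near by eventually_elim (simp add: htilde_above)
    ultimately show ?thesis using 2 Lim_transform_eventually[OF lim] by simp
  next
    case 3
    then show ?thesis
      using assms(2) \<open>x \<in> I\<close> by (simp add: tendsto_htilde_above right_continuous_on_def)
  qed
qed

theorem lemma3p5:
  fixes I J :: "real set" and h :: "real \<Rightarrow> real" and c :: real
  assumes "is_interval I" and "is_interval J" and "h ` I \<subseteq> J"
    and "has_nondec_upper_tail I h"
    and "c = tail_threshold I h"
    and "\<exists>a\<in>I. a < c" and "\<exists>b\<in>I. c < b"
  shows "(left_continuous_on I h \<longrightarrow> left_continuous_on I (htilde I h c))
       \<and> (right_continuous_on I h \<longrightarrow> right_continuous_on I (htilde I h c))"
proof -
  obtain a b where a: "a \<in> I" "a < c" and b: "b \<in> I" "c < b" using assms(6,7) by blast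
  have "c \<in> I" using mem_is_interval_1_I[OF assms(1) a(1) b(1)] a(2) b(2) by simp
  have sep: "h y \<le> h z" if "y \<in> I" "z \<in> I" "y < c" "c < z" for y z
    using le_beyond_tail_threshold assms(4,5) that by simp
  have "bdd_above (h ` {x\<in>I. x < c})"
    using sep b by (auto simp: bdd_above_def)
  then show ?thesis
    using left_continuous_on_htilde[OF assms(1) _ a \<open>c \<in> I\<close>]
      right_continuous_on_htilde[OF assms(1) _ a b \<open>c \<in> I\<close> sep]
    by simp
qed

end
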